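(* Let $(\mathcal{A},\mathcal{E})$ be a finite, essentially small exact category. Then: (GR4) for all $X,Y\in\mathrm{ind}\mathcal{A}$, $\mu_\mathcal{E}(X)\lll\mu_\mathcal{E}(Y)$ or $\mu_\mathcal{E}(Y)\lll\mu_\mathcal{E}(X)$; (GR5) for every $n\in\mathbb{N}$ the set $\{\mu_\mathcal{E}(X) : X\in\mathrm{ind}\mathcal{A},\ l_\mathcal{E}(X)\le n\}$ is finite; (GR6) $X\in\mathrm{ind}\mathcal{A}$ is $\mathcal{E}$-simple if and only if $\mu_\mathcal{E}(X)\lll\mu_\mathcal{E}(Y)$ for all $Y\in\mathrm{ind}\mathcal{A}$.
   Context: $(\mathcal{A},\mathcal{E})$ is a Quillen exact category; admissible monics are morphisms $i$ with $(i,d)\in\mathcal{E}$ for some $d$. $X\subsetneq_\mathcal{E}Y$ means there is an admissible monic $X\to Y$ that is not an isomorphism. A nonzero object $S$ is $\mathcal{E}$-simple if every object $A$ admitting an admissible monic $A\to S$ is zero or isomorphic to $S$. The $\mathcal{E}$-length $l_\mathcal{E}(X)$ is the supremum of all $n$ such that there is a chain $0=X_0\to\cdots\to X_n=X$ of admissible monics none of which is an isomorphism; $(\mathcal{A},\mathcal{E})$ is finite if $l_\mathcal{E}(X)<\infty$ for all $X$. $\mathrm{ind}\mathcal{A}$ is the set of isomorphism classes of indecomposable objects. $\mathfrak{S}(\mathbb{N})$ is the set of finite nonempty sequences of natural numbers, totally ordered by: $x\lll y$ iff $x=y$, or $x$ is a proper prefix of $y$, or at the first index $i$ where $x_i\neq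 y_i$ (both defined) one has $x_i>y_i$. For indecomposable $X$, $\mu_\mathcal{E}(X)$ is the $\lll$-maximum of $(l_\mathcal{E}(X_1),\dots,l_\mathcal{E}(X_n))$ over all chains $X_1\subsetneq_\mathcal{E}\cdots\subsetneq_\mathcal{E}X_n=X$ ($n\ge1$) with all $X_i$ indecomposable. *)

theory Defs
  imports Main "HOL-Library.Extended_Nat"
begin

text \<open>Objects have type 'o, morphisms type 'm.  cmp g f is the composite g after f.
  The preadditive structure (addition, zero, negation of morphisms) is part of the data.\<close>

record ('o,'m) addcat =
  Obj  :: "'o set"
  Hom  :: "'o \<Rightarrow> 'o \<Rightarrow> 'm set"
  cmp  :: "'m \<Rightarrow> 'm \<Rightarrow> 'm"
  idm  :: "'o \<Rightarrow> 'm"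
  padd :: "'m \<Rightarrow> 'm \<Rightarrow> 'm"
  pzero :: "'o \<Rightarrow> 'o \<Rightarrow> 'm"
  pneg :: "'m \<Rightarrow> 'm"

definition is_category :: "('o,'m) addcat \<Rightarrow> bool" where
  "is_category C \<longleftrightarrow>
     (\<forall>X\<in>Obj C. idm C X \<in> Hom C X X) \<and>
     (\<forall>X\<in>Obj C. \<forall>Y\<in>Obj C. \<forall>Z\<in>Obj C. \<forall>f\<in>Hom C X Y. \<forall>g\<in>Hom C Y Z. cmp C g f \<in> Hom C X Z) \<and>
     (\<forall>W\<in>Obj C. \<forall>X\<in>Obj C. \<forall>Y\<in>Obj C. \<forall>Z\<in>Obj C.
        \<forall>f\<in>Hom C W X. \<forall>g\<in>Hom C X Y. \<forall>h\<in>Hom C Y Z.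
          cmp C h (cmp C g f) = cmp C (cmp C h g) f) \<and>
     (\<forall>X\<in>Obj C. \<forall>Y\<in>Obj C. \<forall>f\<in>Hom C X Y.
          cmp C f (idm C X) = f \<and> cmp C (idm C Y) f = f)"

definition is_preadditive :: "('o,'m) addcat \<Rightarrow> bool" where
  "is_preadditive C \<longleftrightarrow> is_category C \<and>
     (\<forall>X\<in>Obj C. \<forall>Y\<in>Obj C.
        pzero C X Y \<in> Hom C X Y \<and>
        (\<forall>f\<in>Hom C X Y. \<forall>g\<in>Hom C X Y. padd C f g \<in> Hom C X Y) \<and>
        (\<forall>f\<in>Hom C X Y. pneg C f \<in> Hom C X Y) \<and>
        (\<forall>f\<in>Hom C X Y. \<forall>g\<in>Hom C X Y. \<forall>h\<in>Hom C X Y.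
            padd C (padd C f g) h = padd C f (padd C g h)) \<and>
        (\<forall>f\<in>Hom C X Y. \<forall>g\<in>Hom C X Y. padd C f g = padd C g f) \<and>
        (\<forall>f\<in>Hom C X Y. padd C f (pzero C X Y) = f) \<and>
        (\<forall>f\<in>Hom C X Y. padd C f (pneg C f) = pzero C X Y)) \<and>
     (\<forall>X\<in>Obj C. \<forall>Y\<in>Obj C. \<forall>Z\<in>Obj C.
        (\<forall>f\<in>Hom C X Y. \<forall>g\<in>Hom C Y Z. \<forall>g'\<in>Hom C Y Z.
            cmp C (padd C g g') f = padd C (cmp C g f) (cmp C g' f)) \<and>
        (\<forall>f\<in>Hom C X Y. \<forall>f'\<in>Hom C X Y. \<forall>g\<in>Hom C Y Z.
            cmp C g (padd C f f') = padd C (cmp C g f) (cmp C g f')))"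

definition is_zero_obj :: "('o,'m) addcat \<Rightarrow> 'o \<Rightarrow> bool" where
  "is_zero_obj C Z \<longleftrightarrow> Z \<in> Obj C \<and>
     (\<forall>X\<in>Obj C. (\<exists>!f. f \<in> Hom C Z X) \<and> (\<exists>!f. f \<in> Hom C X Z))"

definition is_biproduct :: "('o,'m) addcat \<Rightarrow> 'o \<Rightarrow> 'o \<Rightarrow> 'o \<Rightarrow> 'm \<Rightarrow> 'm \<Rightarrow> 'm \<Rightarrow> 'm \<Rightarrow> bool" where
  "is_biproduct C X1 X2 B i1 i2 p1 p2 \<longleftrightarrow>
     X1 \<in> Obj C \<and> X2 \<in> Obj C \<and> B \<in> Obj C \<and>
     i1 \<in> Hom C X1 B \<and> i2 \<in> Hom C X2 B \<and> p1 \<in> Hom C B X1 \<and> p2 \<in> Hom C B X2 \<and>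
     cmp C p1 i1 = idm C X1 \<and> cmp C p2 i2 = idm C X2 \<and>
     padd C (cmp C i1 p1) (cmp C i2 p2) = idm C B"

definition is_additive :: "('o,'m) addcat \<Rightarrow> bool" where
  "is_additive C \<longleftrightarrow> is_preadditive C \<and> (\<exists>Z. is_zero_obj C Z) \<and>
     (\<forall>X1\<in>Obj C. \<forall>X2\<in>Obj C. \<exists>B i1 i2 p1 p2. is_biproduct C X1 X2 B i1 i2 p1 p2)"

definition is_iso :: "('o,'m) addcat \<Rightarrow> 'o \<Rightarrow> 'o \<Rightarrow> 'm \<Rightarrow> bool" where
  "is_iso C X Y f \<longleftrightarrow> X \<in> Obj C \<and> Y \<in> Obj C \<and> f \<in> Hom C X Y \<and>
     (\<exists>g\<in>Hom C Y X. cmp C g f = idm C X \<and> cmp C f g = idm C Y)"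

definition isomorphic :: "('o,'m) addcat \<Rightarrow> 'o \<Rightarrow> 'o \<Rightarrow> bool" where
  "isomorphic C X Y \<longleftrightarrow> (\<exists>f. is_iso C X Y f)"

definition is_kernel :: "('o,'m) addcat \<Rightarrow> 'o \<Rightarrow> 'o \<Rightarrow> 'o \<Rightarrow> 'm \<Rightarrow> 'm \<Rightarrow> bool" where
  "is_kernel C X Y Z i d \<longleftrightarrow>
     X \<in> Obj C \<and> Y \<in> Obj C \<and> Z \<in> Obj C \<and> i \<in> Hom C X Y \<and> d \<in> Hom C Y Z \<and>
     cmp C d i = pzero C X Z \<and>
     (\<forall>W\<in>Obj C. \<forall>g\<in>Hom C W Y. cmp C d g = pzero C W Z \<longrightarrow>
        (\<exists>h\<in>Hom C W X. cmp C i h = g \<and> (\<forall>h'\<in>Hom C W X. cmp C i h' = g \<longrightarrow> h' = h)))"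

definition is_cokernel :: "('o,'m) addcat \<Rightarrow> 'o \<Rightarrow> 'o \<Rightarrow> 'o \<Rightarrow> 'm \<Rightarrow> 'm \<Rightarrow> bool" where
  "is_cokernel C X Y Z i d \<longleftrightarrow>
     X \<in> Obj C \<and> Y \<in> Obj C \<and> Z \<in> Obj C \<and> i \<in> Hom C X Y \<and> d \<in> Hom C Y Z \<and>
     cmp C d i = pzero C X Z \<and>
     (\<forall>W\<in>Obj C. \<forall>g\<in>Hom C Y W. cmp C g i = pzero C X W \<longrightarrow>
        (\<exists>h\<in>Hom C Z W. cmp C h d = g \<and> (\<forall>h'\<in>Hom C Z W. cmp C h' d = g \<longrightarrow> h' = h)))"

definition is_kc_pair :: "('o,'m) addcat \<Rightarrow> 'o \<Rightarrow> 'o \<Rightarrow> 'o \<Rightarrow> 'm \<Rightarrow> 'm \<Rightarrow> bool" where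
  "is_kc_pair C X Y Z i d \<longleftrightarrow> is_kernel C X Y Z i d \<and> is_cokernel C X Y Z i d"

text \<open>A class of kernel-cokernel pairs: tuples (X, Y, Z, i, d) with i : X \<rightarrow> Y, d : Y \<rightarrow> Z.\<close>
type_synonym ('o,'m) conflations = "('o \<times> 'o \<times> 'o \<times> 'm \<times> 'm) set"

definition adm_monic :: "('o,'m) addcat \<Rightarrow> ('o,'m) conflations \<Rightarrow> 'o \<Rightarrow> 'o \<Rightarrow> 'm \<Rightarrow> bool" where
  "adm_monic C E X Y i \<longleftrightarrow> (\<exists>Z d. (X, Y, Z, i, d) \<in> E)"

definition adm_epic :: "('o,'m) addcat \<Rightarrow> ('o,'m) conflations \<Rightarrow> 'o \<Rightarrow> 'o \<Rightarrow> 'm \<Rightarrow> bool" where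
  "adm_epic C E Y Z d \<longleftrightarrow> (\<exists>X i. (X, Y, Z, i, d) \<in> E)"

text \<open>Quillen's axioms (in the form of Buehler, Exact categories, Def. 2.1).\<close>
definition is_exact_category :: "('o,'m) addcat \<Rightarrow> ('o,'m) conflations \<Rightarrow> bool" where
  "is_exact_category C E \<longleftrightarrow> is_additive C \<and>
     \<comment> \<open>E consists of kernel-cokernel pairs\<close>
     (\<forall>(X, Y, Z, i, d) \<in> E. is_kc_pair C X Y Z i d) \<and>
     \<comment> \<open>E is closed under isomorphisms of kernel-cokernel pairs\<close>
     (\<forall>(X, Y, Z, i, d) \<in> E. \<forall>X' Y' Z' i' d' a b c.
        is_kc_pair C X' Y' Z' i' d' \<and> is_iso C X X' a \<and> is_iso C Y Y' b \<and> is_iso C Z Z' c \<and>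
        cmp C b i = cmp C i' a \<and> cmp C c d = cmp C d' b \<longrightarrow> (X', Y', Z', i', d') \<in> E) \<and>
     \<comment> \<open>[E0], [E0op]\<close>
     (\<forall>X\<in>Obj C. adm_monic C E X X (idm C X)) \<and>
     (\<forall>X\<in>Obj C. adm_epic C E X X (idm C X)) \<and>
     \<comment> \<open>[E1], [E1op]\<close>
     (\<forall>X Y Z f g. adm_monic C E X Y f \<and> adm_monic C E Y Z g \<longrightarrow> adm_monic C E X Z (cmp C g f)) \<and>
     (\<forall>X Y Z f g. adm_epic C E X Y f \<and> adm_epic C E Y Z g \<longrightarrow> adm_epic C E X Z (cmp C g f)) \<and>
     \<comment> \<open>[E2]: pushouts along admissible monics exist and admissible monics are stable under them\<close>
     (\<forall>X Y X' i f. adm_monic C E X Y i \<and> X' \<in> Obj C \<and> f \<in> Hom C X X' \<longrightarrow>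
        (\<exists>Y' i' f'. Y' \<in> Obj C \<and> i' \<in> Hom C X' Y' \<and> f' \<in> Hom C Y Y' \<and>
           cmp C i' f = cmp C f' i \<and>
           (\<forall>W\<in>Obj C. \<forall>a\<in>Hom C X' W. \<forall>b\<in>Hom C Y W. cmp C a f = cmp C b i \<longrightarrow>
              (\<exists>h\<in>Hom C Y' W. cmp C h i' = a \<and> cmp C h f' = b \<and>
                 (\<forall>h'\<in>Hom C Y' W. cmp C h' i' = a \<and> cmp C h' f' = b \<longrightarrow> h' = h))) \<and>
           adm_monic C E X' Y' i')) \<and>
     \<comment> \<open>[E2op]: pullbacks along admissible epics exist and admissible epics are stable under them\<close>
     (\<forall>Y Z Z' d f. adm_epic C E Y Z d \<and> Z' \<in> Obj C \<and> f \<in> Hom C Z' Z \<longrightarrow>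
        (\<exists>Y' d' f'. Y' \<in> Obj C \<and> d' \<in> Hom C Y' Z' \<and> f' \<in> Hom C Y' Y \<and>
           cmp C f d' = cmp C d f' \<and>
           (\<forall>W\<in>Obj C. \<forall>a\<in>Hom C W Z'. \<forall>b\<in>Hom C W Y. cmp C f a = cmp C d b \<longrightarrow>
              (\<exists>h\<in>Hom C W Y'. cmp C d' h = a \<and> cmp C f' h = b \<and>
                 (\<forall>h'\<in>Hom C W Y'. cmp C d' h' = a \<and> cmp C f' h' = b \<longrightarrow> h' = h))) \<and>
           adm_epic C E Y' Z' d'))"

definition proper_adm_sub :: "('o,'m) addcat \<Rightarrow> ('o,'m) conflations \<Rightarrow> 'o \<Rightarrow> 'o \<Rightarrow> bool" where
  "proper_adm_sub C E X Y \<longleftrightarrow> (\<exists>i. adm_monic C E X Y i \<and> \<not> is_iso C X Y i)"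

definition E_simple :: "('o,'m) addcat \<Rightarrow> ('o,'m) conflations \<Rightarrow> 'o \<Rightarrow> bool" where
  "E_simple C E S \<longleftrightarrow> S \<in> Obj C \<and> \<not> is_zero_obj C S \<and>
     (\<forall>A i. adm_monic C E A S i \<longrightarrow> is_zero_obj C A \<or> isomorphic C A S)"

definition indecomposable :: "('o,'m) addcat \<Rightarrow> 'o \<Rightarrow> bool" where
  "indecomposable C X \<longleftrightarrow> X \<in> Obj C \<and> \<not> is_zero_obj C X \<and>
     (\<forall>X1 X2 i1 i2 p1 p2. is_biproduct C X1 X2 X i1 i2 p1 p2 \<longrightarrow>
        is_zero_obj C X1 \<or> is_zero_obj C X2)"

definition E_chain :: "('o,'m) addcat \<Rightarrow> ('o,'m) conflations \<Rightarrow> 'o list \<Rightarrow> bool" where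
  "E_chain C E xs \<longleftrightarrow> xs \<noteq> [] \<and> set xs \<subseteq> Obj C \<and>
     (\<forall>k < length xs - 1. proper_adm_sub C E (xs ! k) (xs ! Suc k))"

definition E_length :: "('o,'m) addcat \<Rightarrow> ('o,'m) conflations \<Rightarrow> 'o \<Rightarrow> enat" where
  "E_length C E X = Sup {enat (length xs - 1) | xs.
      E_chain C E xs \<and> is_zero_obj C (hd xs) \<and> last xs = X}"

definition E_finite :: "('o,'m) addcat \<Rightarrow> ('o,'m) conflations \<Rightarrow> bool" where
  "E_finite C E \<longleftrightarrow> (\<forall>X\<in>Obj C. E_length C E X < \<infinity>)"

definition seq_le :: "nat list \<Rightarrow> nat list \<Rightarrow> bool" (infix "\<lll>" 50) where
  "x \<lll> y \<longleftrightarrow> x = y \<or> (length x < length y \<and> take (length x) y = x) \<or>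
     (\<exists>i < min (length x) (length y). take i x = take i y \<and> x ! i > y ! i)"

definition GR_seqs :: "('o,'m) addcat \<Rightarrow> ('o,'m) conflations \<Rightarrow> 'o \<Rightarrow> nat list set" where
  "GR_seqs C E X = {map (\<lambda>Y. the_enat (E_length C E Y)) xs | xs.
      E_chain C E xs \<and> last xs = X \<and> (\<forall>Y\<in>set xs. indecomposable C Y)}"

definition GR_measure :: "('o,'m) addcat \<Rightarrow> ('o,'m) conflations \<Rightarrow> 'o \<Rightarrow> nat list" where
  "GR_measure C E X = (THE s. s \<in> GR_seqs C E X \<and> (\<forall>t\<in>GR_seqs C E X. t \<lll> s))"

end

(*
  The order \<lll> is the lexicographic order on lists for the reversed order on \<nat>, hence total
  (GR4). Lengths strictly increase along a chain of admissible monics, so the Gabriel-Roiter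
  measure of X is a sequence of at most l(X) numbers in {1..l(X)}, leaving finitely many
  candidates for objects of length at most n (GR5). For GR6, the first nonzero term of a longest
  chain 0 = X_0 \<subsetneq> X_1 \<subsetneq> ... \<subsetneq> X_n = Y has length 1; objects of length 1 are E-simple and
  indecomposable (a proper summand would have length 0). Hence every measure starts with 1, the
  \<lll>-least conceivable measure is [1], and it is attained exactly by the E-simple objects.
*)

theory Submission
  imports Defs
begin

section \<open>The order on sequences\<close>

lemma seq_le_iff_lexord: "x \<lll> y \<longleftrightarrow> x = y \<or> (x, y) \<in> lexord {(a :: nat, b). b < a}"
  unfolding seq_le_def lexord_take_index_conv by auto

lemma seq_le_refl: "x \<lll> x"
  by (simp add: seq_le_def)

lemma seq_le_trans: "x \<lll> y \<Longrightarrow> y \<lll> z \<Longrightarrow> x \<lll> z"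
  unfolding seq_le_iff_lexord using lexord_trans[of _ _ "{(a :: nat, b). b < a}"]
  by (auto simp: trans_def)

lemma seq_le_antisym: "x \<lll> y \<Longrightarrow> y \<lll> x \<Longrightarrow> x = y"
  unfolding seq_le_iff_lexord
  using lexord_trans[of x y "{(a :: nat, b). b < a}" x] lexord_irreflexive[of _ x]
  by (auto simp: trans_def)

lemma seq_le_total: "x \<lll> y \<or> y \<lll> x"
proof -
  have "\<forall>a b. (a, b) \<in> {(a :: nat, b). b < a} \<or> a = b \<or> (b, a) \<in> {(a, b). b < a}"
    by auto
  then show ?thesis
    unfolding seq_le_iff_lexord using lexord_linear by blast
qed

lemma finite_has_seq_le_greatest:
  assumes "finite S" and "S \<noteq> {}"
  shows "\<exists>m\<in>S. \<forall>t\<in>S. t \<lll> m"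
  using assms
proof (induction S rule: finite_ne_induct)
  case (singleton x)
  then show ?case by (simp add: seq_le_refl)
next
  case (insert x F)
  then obtain m where "m \<in> F" and m: "\<forall>t\<in>F. t \<lll> m" by blast
  show ?case
  proof (cases "x \<lll> m")
    case True
    then show ?thesis using \<open>m \<in> F\<close> m by auto
  next
    case False
    then have "m \<lll> x" using seq_le_total by blast
    then have "\<forall>t\<in>insert x F. t \<lll> x" using m seq_le_trans seq_le_refl by blast
    then show ?thesis by blast
  qed
qed

lemma seq_le_hd:
  assumes "x \<lll> y" and "x \<noteq> []" and "y \<noteq> []"
  shows "hd y \<le> hd x"
  using assms(1) unfolding seq_le_def
proof (elim disjE conjE exE)
  assume "take (length x) y = x"
  then show ?thesis using assms(2,3) by (metis hd_take le_refl length_greater_0_conv)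
next
  fix i assume "take i x = take i y" and "y ! i < x ! i"
  then show ?thesis using assms(2,3)
    by (cases "i = 0") (auto simp: hd_conv_nth dest: arg_cong[where f = "\<lambda>xs. xs ! 0"])
qed simp

lemma singleton_hd_seq_le: "y \<noteq> [] \<Longrightarrow> [hd y] \<lll> y"
  unfolding seq_le_def by (cases y) auto

lemma seq_le_singleton_hd: "x \<lll> [hd x] \<Longrightarrow> x \<noteq> [] \<Longrightarrow> x = [hd x]"
  unfolding seq_le_def by (cases x) (auto simp: less_Suc_eq_0_disj)

section \<open>Preadditive categories\<close>

locale preadditive_cat =
  fixes C :: "('o, 'm) addcat"
  assumes preadditive: "is_preadditive C"
begin

lemma category: "is_category C"
  using preadditive unfolding is_preadditive_def by blast

lemma id_hom: "X \<in> Obj C \<Longrightarrow> idm C X \<in> Hom C X X"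
  using category unfolding is_category_def by blast

lemma comp_hom:
  "\<lbrakk>X \<in> Obj C; Y \<in> Obj C; Z \<in> Obj C; f \<in> Hom C X Y; g \<in> Hom C Y Z\<rbrakk> \<Longrightarrow> cmp C g f \<in> Hom C X Z"
  using category unfolding is_category_def by blast

lemma comp_assoc:
  "\<lbrakk>W \<in> Obj C; X \<in> Obj C; Y \<in> Obj C; Z \<in> Obj C; f \<in> Hom C W X; g \<in> Hom C X Y; h \<in> Hom C Y Z\<rbrakk>
   \<Longrightarrow> cmp C h (cmp C g f) = cmp C (cmp C h g) f"
  using category unfolding is_category_def by blast

lemma comp_id_right: "\<lbrakk>X \<in> Obj C; Y \<in> Obj C; f \<in> Hom C X Y\<rbrakk> \<Longrightarrow> cmp C f (idm C X) = f"
  using category unfolding is_category_def by blast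

lemma comp_id_left: "\<lbrakk>X \<in> Obj C; Y \<in> Obj C; f \<in> Hom C X Y\<rbrakk> \<Longrightarrow> cmp C (idm C Y) f = f"
  using category unfolding is_category_def by blast

lemma hom_group:
  assumes "X \<in> Obj C" and "Y \<in> Obj C"
  shows "pzero C X Y \<in> Hom C X Y"
    and "\<lbrakk>f \<in> Hom C X Y; g \<in> Hom C X Y\<rbrakk> \<Longrightarrow> padd C f g \<in> Hom C X Y"
    and "f \<in> Hom C X Y \<Longrightarrow> pneg C f \<in> Hom C X Y"
    and "\<lbrakk>f \<in> Hom C X Y; g \<in> Hom C X Y; h \<in> Hom C X Y\<rbrakk>
         \<Longrightarrow> padd C (padd C f g) h = padd C f (padd C g h)"
    and "\<lbrakk>f \<in> Hom C X Y; g \<in> Hom C X Y\<rbrakk> \<Longrightarrow> padd C f g = padd C g f"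
    and "f \<in> Hom C X Y \<Longrightarrow> padd C f (pzero C X Y) = f"
    and "f \<in> Hom C X Y \<Longrightarrow> padd C f (pneg C f) = pzero C X Y"
  using preadditive assms unfolding is_preadditive_def by meson+

lemmas zero_hom = hom_group(1)
  and add_hom = hom_group(2)
  and neg_hom = hom_group(3)
  and add_assoc = hom_group(4)
  and add_comm = hom_group(5)
  and add_zero = hom_group(6)
  and add_neg = hom_group(7)

lemma comp_add_left:
  "\<lbrakk>X \<in> Obj C; Y \<in> Obj C; Z \<in> Obj C; f \<in> Hom C X Y; g \<in> Hom C Y Z; g' \<in> Hom C Y Z\<rbrakk>
   \<Longrightarrow> cmp C (padd C g g') f = padd C (cmp C g f) (cmp C g' f)"
  using preadditive unfolding is_preadditive_def by meson

lemma comp_add_right: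
  "\<lbrakk>X \<in> Obj C; Y \<in> Obj C; Z \<in> Obj C; f \<in> Hom C X Y; f' \<in> Hom C X Y; g \<in> Hom C Y Z\<rbrakk>
   \<Longrightarrow> cmp C g (padd C f f') = padd C (cmp C g f) (cmp C g f')"
  using preadditive unfolding is_preadditive_def by meson

lemma add_left_eq_self:
  assumes "X \<in> Obj C" "Y \<in> Obj C" "a \<in> Hom C X Y" "b \<in> Hom C X Y" and "padd C a b = b"
  shows "a = pzero C X Y"
proof -
  have "padd C (padd C a b) (pneg C b) = padd C a (padd C b (pneg C b))"
    using assms(1-4) neg_hom add_assoc by blast
  then show ?thesis using assms add_neg add_zero by simp
qed

lemma comp_zero_right:
  assumes X: "X \<in> Obj C" and Y: "Y \<in> Obj C" and V: "V \<in> Obj C" and f: "f \<in> Hom C Y V"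
  shows "cmp C f (pzero C X Y) = pzero C X V"
proof -
  have z: "pzero C X Y \<in> Hom C X Y" using X Y zero_hom by blast
  have fz: "cmp C f (pzero C X Y) \<in> Hom C X V" using X Y V f z comp_hom by blast
  have "cmp C f (pzero C X Y) = cmp C f (padd C (pzero C X Y) (pzero C X Y))"
    using X Y z add_zero by simp
  also have "\<dots> = padd C (cmp C f (pzero C X Y)) (cmp C f (pzero C X Y))"
    using comp_add_right[OF X Y V z z f] .
  finally show ?thesis using add_left_eq_self[OF X V fz fz] by simp
qed

lemma comp_zero_left:
  assumes X: "X \<in> Obj C" and Y: "Y \<in> Obj C" and V: "V \<in> Obj C" and g: "g \<in> Hom C X Y"
  shows "cmp C (pzero C Y V) g = pzero C X V"
proof -
  have z: "pzero C Y V \<in> Hom C Y V" using Y V zero_hom by blast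
  have zg: "cmp C (pzero C Y V) g \<in> Hom C X V" using X Y V g z comp_hom by blast
  have "cmp C (pzero C Y V) g = cmp C (padd C (pzero C Y V) (pzero C Y V)) g"
    using Y V z add_zero by simp
  also have "\<dots> = padd C (cmp C (pzero C Y V) g) (cmp C (pzero C Y V) g)"
    using comp_add_left[OF X Y V g z z] .
  finally show ?thesis using add_left_eq_self[OF X V zg zg] by simp
qed

lemma zero_obj_Obj: "is_zero_obj C Z \<Longrightarrow> Z \<in> Obj C"
  unfolding is_zero_obj_def by blast

lemma zero_obj_hom_from: "\<lbrakk>is_zero_obj C Z; V \<in> Obj C; f \<in> Hom C Z V\<rbrakk> \<Longrightarrow> f = pzero C Z V"
  unfolding is_zero_obj_def using zero_hom by blast

lemma zero_obj_hom_to: "\<lbrakk>is_zero_obj C Z; V \<in> Obj C; f \<in> Hom C V Z\<rbrakk> \<Longrightarrow> f = pzero C V Z"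
  unfolding is_zero_obj_def using zero_hom by blast

lemma zero_objI:
  assumes Y: "Y \<in> Obj C"
    and to_unique: "\<And>V h h'. \<lbrakk>V \<in> Obj C; h \<in> Hom C V Y; h' \<in> Hom C V Y\<rbrakk> \<Longrightarrow> h = h'"
  shows "is_zero_obj C Y"
proof -
  have id_zero: "idm C Y = pzero C Y Y" using to_unique Y id_hom zero_hom by blast
  have "f = pzero C Y V" if "V \<in> Obj C" "f \<in> Hom C Y V" for V f
    using comp_id_right[OF Y that] comp_zero_right[OF Y Y that] id_zero by simp
  then show ?thesis unfolding is_zero_obj_def using Y to_unique zero_hom by metis
qed

lemma is_iso_id: "X \<in> Obj C \<Longrightarrow> is_iso C X X (idm C X)"
  unfolding is_iso_def using id_hom comp_id_left by blast

lemma is_iso_inverse: "is_iso C X Y f \<Longrightarrow> \<exists>g. is_iso C Y X g"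
  unfolding is_iso_def by blast

lemma is_iso_comp:
  assumes f: "is_iso C X Y f" and g: "is_iso C Y Z g"
  shows "is_iso C X Z (cmp C g f)"
proof -
  obtain f' g' where X: "X \<in> Obj C" and Y: "Y \<in> Obj C" and Z: "Z \<in> Obj C"
    and fh: "f \<in> Hom C X Y" and f'h: "f' \<in> Hom C Y X" and gh: "g \<in> Hom C Y Z" and g'h: "g' \<in> Hom C Z Y"
    and ff': "cmp C f' f = idm C X" "cmp C f f' = idm C Y"
    and gg': "cmp C g' g = idm C Y" "cmp C g g' = idm C Z"
    using f g unfolding is_iso_def by blast
  have gf: "cmp C g f \<in> Hom C X Z" and fg: "cmp C f' g' \<in> Hom C Z X"
    using X Y Z fh f'h gh g'h comp_hom by blast+
  have "cmp C (cmp C f' g') (cmp C g f) = cmp C f' (cmp C g' (cmp C g f))"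
    using comp_assoc[OF X Z Y X gf g'h f'h] by simp
  also have "cmp C g' (cmp C g f) = f"
    using comp_assoc[OF X Y Z Y fh gh g'h] gg' comp_id_left[OF X Y fh] by simp
  finally have left: "cmp C (cmp C f' g') (cmp C g f) = idm C X" using ff' by simp
  have "cmp C (cmp C g f) (cmp C f' g') = cmp C g (cmp C f (cmp C f' g'))"
    using comp_assoc[OF Z X Y Z fg fh gh] by simp
  also have "cmp C f (cmp C f' g') = g'"
    using comp_assoc[OF Z Y X Y g'h f'h fh] ff' comp_id_left[OF Z Y g'h] by simp
  finally have right: "cmp C (cmp C g f) (cmp C f' g') = idm C Z" using gg' by simp
  show ?thesis
    unfolding is_iso_def using X Z gf fg left right by blast
qed

lemma is_iso_cancel_left:
  assumes g: "is_iso C Y Z g" and gf: "is_iso C X Z (cmp C g f)" and f: "f \<in> Hom C X Y"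
  shows "is_iso C X Y f"
proof -
  obtain g' where X: "X \<in> Obj C" and Y: "Y \<in> Obj C" and Z: "Z \<in> Obj C"
    and gh: "g \<in> Hom C Y Z" and g'h: "g' \<in> Hom C Z Y" and g'g: "cmp C g' g = idm C Y"
    and gg': "cmp C g g' = idm C Z"
    using g gf unfolding is_iso_def by blast
  have g': "is_iso C Z Y g'" unfolding is_iso_def using Y Z gh g'h g'g gg' by blast
  have "cmp C g' (cmp C g f) = f"
    using comp_assoc[OF X Y Z Y f gh g'h] g'g comp_id_left[OF X Y f] by simp
  then show ?thesis using is_iso_comp[OF gf g'] by simp
qed

lemma is_iso_zero_obj:
  assumes Z: "is_zero_obj C Z" and i: "is_iso C Z X i"
  shows "is_zero_obj C X"
proof -
  obtain g where X: "X \<in> Obj C" and ih: "i \<in> Hom C Z X" and g: "g \<in> Hom C X Z"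
    and ig: "cmp C i g = idm C X"
    using i unfolding is_iso_def by blast
  have Zo: "Z \<in> Obj C" using zero_obj_Obj[OF Z] .
  show ?thesis
  proof (rule zero_objI[OF X])
    fix V h h' assume V: "V \<in> Obj C" and h: "h \<in> Hom C V X" and h': "h' \<in> Hom C V X"
    have "cmp C g h = cmp C g h'" using zero_obj_hom_to[OF Z V] comp_hom V X Zo h h' g by metis
    moreover have "k = cmp C i (cmp C g k)" if "k \<in> Hom C V X" for k
      using comp_assoc[OF V X Zo X that g ih] ig comp_id_left[OF V X that] by simp
    ultimately show "h = h'" using h h' by metis
  qed
qed

lemma zero_obj_is_iso:
  assumes Z: "is_zero_obj C Z" and Z': "is_zero_obj C Z'" and i: "i \<in> Hom C Z Z'"
  shows "is_iso C Z Z' i"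
proof -
  have Zo: "Z \<in> Obj C" and Z'o: "Z' \<in> Obj C" using Z Z' zero_obj_Obj by blast+
  have "pzero C Z' Z \<in> Hom C Z' Z" using Zo Z'o zero_hom by blast
  moreover have "cmp C (pzero C Z' Z) i = idm C Z"
    using zero_obj_hom_to[OF Z Zo] comp_hom[OF Zo Z'o Zo i calculation] id_hom[OF Zo] by metis
  moreover have "cmp C i (pzero C Z' Z) = idm C Z'"
    using zero_obj_hom_to[OF Z' Z'o] comp_hom[OF Z'o Zo Z'o calculation(1) i] id_hom[OF Z'o] by metis
  ultimately show ?thesis unfolding is_iso_def using Zo Z'o i by blast
qed

lemma biproduct_swap:
  assumes "is_biproduct C A B S i1 i2 p1 p2"
  shows "is_biproduct C B A S i2 i1 p2 p1"
proof -
  have "cmp C i1 p1 \<in> Hom C S S" "cmp C i2 p2 \<in> Hom C S S"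
    using assms comp_hom unfolding is_biproduct_def by blast+
  then show ?thesis using assms add_comm unfolding is_biproduct_def by metis
qed

lemma biproduct_proj_inj_zero:
  assumes bp: "is_biproduct C A B S i1 i2 p1 p2"
  shows "cmp C p2 i1 = pzero C A B"
proof -
  have A: "A \<in> Obj C" and B: "B \<in> Obj C" and S: "S \<in> Obj C"
    and i1: "i1 \<in> Hom C A S" and i2: "i2 \<in> Hom C B S" and p1: "p1 \<in> Hom C S A" and p2: "p2 \<in> Hom C S B"
    and e1: "cmp C p1 i1 = idm C A" and e2: "cmp C p2 i2 = idm C B"
    and e3: "padd C (cmp C i1 p1) (cmp C i2 p2) = idm C S"
    using bp unfolding is_biproduct_def by blast+
  have ip1: "cmp C i1 p1 \<in> Hom C S S" and ip2: "cmp C i2 p2 \<in> Hom C S S"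
    using comp_hom A B S i1 i2 p1 p2 by blast+
  have x: "cmp C p2 (cmp C i1 p1) \<in> Hom C S B" using comp_hom S B ip1 p2 by blast
  have "p2 = cmp C p2 (idm C S)" using comp_id_right S B p2 by simp
  also have "\<dots> = padd C (cmp C p2 (cmp C i1 p1)) (cmp C p2 (cmp C i2 p2))"
    using e3 comp_add_right[OF S S B ip1 ip2 p2] by simp
  also have "cmp C p2 (cmp C i2 p2) = p2"
    using comp_assoc[OF S B S B p2 i2 p2] e2 comp_id_left B p2 S by simp
  finally have "cmp C p2 (cmp C i1 p1) = pzero C S B"
    using add_left_eq_self[OF S B x p2] by simp
  then have "cmp C (cmp C p2 i1) p1 = pzero C S B" using comp_assoc[OF S A S B p1 i1 p2] by simp
  moreover have "cmp C p2 i1 = cmp C (cmp C (cmp C p2 i1) p1) i1"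
  proof -
    have pi: "cmp C p2 i1 \<in> Hom C A B" using comp_hom A S B i1 p2 by blast
    then show ?thesis using e1 comp_assoc[OF A S A B i1 p1 pi] comp_id_right[OF A B pi] by simp
  qed
  ultimately show ?thesis using comp_zero_left A S B i1 by simp
qed

lemma biproduct_zero_if_inj_iso:
  assumes bp: "is_biproduct C A B S i1 i2 p1 p2" and iso: "is_iso C A S i1"
  shows "is_zero_obj C B"
proof -
  have A: "A \<in> Obj C" and B: "B \<in> Obj C" and S: "S \<in> Obj C" and i1: "i1 \<in> Hom C A S"
    and i2: "i2 \<in> Hom C B S" and p2: "p2 \<in> Hom C S B" and e2: "cmp C p2 i2 = idm C B"
    using bp unfolding is_biproduct_def by blast+
  obtain q where q: "q \<in> Hom C S A" and iq: "cmp C i1 q = idm C S" using iso unfolding is_iso_def by blast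
  have qi2: "cmp C q i2 \<in> Hom C B A" using comp_hom B S A i2 q by blast
  have "i2 = cmp C i1 (cmp C q i2)"
    using iq comp_id_left[OF B S i2] comp_assoc[OF B S A S i2 q i1] by simp
  then have "idm C B = cmp C (cmp C p2 i1) (cmp C q i2)"
    using e2 comp_assoc[OF B A S B qi2 i1 p2] by simp
  also have "\<dots> = pzero C B B"
    using biproduct_proj_inj_zero[OF bp] comp_zero_left B A B qi2 by simp
  finally have id_zero: "idm C B = pzero C B B" .
  show ?thesis
  proof (rule zero_objI[OF B])
    fix V h h' assume "V \<in> Obj C" "h \<in> Hom C V B" "h' \<in> Hom C V B"
    then show "h = h'" using comp_id_left[OF _ B] id_zero comp_zero_left[OF _ B B] by metis
  qed
qed

lemma biproduct_copair_inj1: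
  assumes bp: "is_biproduct C A B S i1 i2 p1 p2" and P: "P \<in> Obj C"
    and a: "a \<in> Hom C A P" and b: "b \<in> Hom C B P"
  shows "cmp C (padd C (cmp C a p1) (cmp C b p2)) i1 = a"
proof -
  have A: "A \<in> Obj C" and B: "B \<in> Obj C" and S: "S \<in> Obj C"
    and i1: "i1 \<in> Hom C A S" and p1: "p1 \<in> Hom C S A" and p2: "p2 \<in> Hom C S B"
    and e1: "cmp C p1 i1 = idm C A"
    using bp unfolding is_biproduct_def by blast+
  have "cmp C (padd C (cmp C a p1) (cmp C b p2)) i1 = padd C (cmp C (cmp C a p1) i1) (cmp C (cmp C b p2) i1)"
    using comp_add_left[OF A S P i1] comp_hom S A B P p1 p2 a b by blast
  also have "cmp C (cmp C a p1) i1 = a"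
    using comp_assoc[OF A S A P i1 p1 a] e1 comp_id_right[OF A P a] by simp
  also have "cmp C (cmp C b p2) i1 = pzero C A P"
    using comp_assoc[OF A S B P i1 p2 b] biproduct_proj_inj_zero[OF bp] comp_zero_right[OF A B P b] by simp
  finally show ?thesis using add_zero[OF A P a] by simp
qed

lemma biproduct_copair:
  assumes bp: "is_biproduct C A B S i1 i2 p1 p2" and P: "P \<in> Obj C"
    and a: "a \<in> Hom C A P" and b: "b \<in> Hom C B P"
  shows "padd C (cmp C a p1) (cmp C b p2) \<in> Hom C S P"
    and "cmp C (padd C (cmp C a p1) (cmp C b p2)) i1 = a"
    and "cmp C (padd C (cmp C a p1) (cmp C b p2)) i2 = b"
proof -
  have A: "A \<in> Obj C" and B: "B \<in> Obj C" and S: "S \<in> Obj C"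
    and p1: "p1 \<in> Hom C S A" and p2: "p2 \<in> Hom C S B"
    using bp unfolding is_biproduct_def by blast+
  have ap: "cmp C a p1 \<in> Hom C S P" and bp': "cmp C b p2 \<in> Hom C S P"
    using comp_hom S A B P p1 p2 a b by blast+
  show "padd C (cmp C a p1) (cmp C b p2) \<in> Hom C S P" using add_hom[OF S P ap bp'] .
  show "cmp C (padd C (cmp C a p1) (cmp C b p2)) i1 = a" using biproduct_copair_inj1[OF bp P a b] .
  show "cmp C (padd C (cmp C a p1) (cmp C b p2)) i2 = b"
    using biproduct_copair_inj1[OF biproduct_swap[OF bp] P b a] add_comm[OF S P ap bp'] by simp
qed

lemma comp_biproduct_copair_eq_id:
  assumes bp: "is_biproduct C A B S i1 i2 p1 p2" and P: "P \<in> Obj C"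
    and a: "a \<in> Hom C A P" and b: "b \<in> Hom C B P" and h: "h \<in> Hom C P S"
    and ha: "cmp C h a = i1" and hb: "cmp C h b = i2"
  shows "cmp C h (padd C (cmp C a p1) (cmp C b p2)) = idm C S"
proof -
  have A: "A \<in> Obj C" and B: "B \<in> Obj C" and S: "S \<in> Obj C"
    and p1: "p1 \<in> Hom C S A" and p2: "p2 \<in> Hom C S B"
    and e3: "padd C (cmp C i1 p1) (cmp C i2 p2) = idm C S"
    using bp unfolding is_biproduct_def by blast+
  have "cmp C h (padd C (cmp C a p1) (cmp C b p2)) = padd C (cmp C h (cmp C a p1)) (cmp C h (cmp C b p2))"
    using comp_add_right[OF S P S _ _ h] comp_hom S A B P p1 p2 a b by blast
  also have "\<dots> = idm C S"
    using comp_assoc[OF S A P S p1 a h] comp_assoc[OF S B P S p2 b h] ha hb e3 by simp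
  finally show ?thesis .
qed

lemma is_kernel_transport:
  assumes k: "is_kernel C X Y Z i d" and Y': "Y' \<in> Obj C"
    and b: "b \<in> Hom C Y Y'" and b': "b' \<in> Hom C Y' Y"
    and b'b: "cmp C b' b = idm C Y" and bb': "cmp C b b' = idm C Y'"
  shows "is_kernel C X Y' Z (cmp C b i) (cmp C d b')"
proof -
  have X: "X \<in> Obj C" and Y: "Y \<in> Obj C" and Z: "Z \<in> Obj C" and ih: "i \<in> Hom C X Y"
    and dh: "d \<in> Hom C Y Z" and di: "cmp C d i = pzero C X Z"
    and univ: "\<And>W g. \<lbrakk>W \<in> Obj C; g \<in> Hom C W Y; cmp C d g = pzero C W Z\<rbrakk>
        \<Longrightarrow> \<exists>h\<in>Hom C W X. cmp C i h = g \<and> (\<forall>h'\<in>Hom C W X. cmp C i h' = g \<longrightarrow> h' = h)"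
    using k unfolding is_kernel_def by blast+
  have bi: "cmp C b i \<in> Hom C X Y'" and db': "cmp C d b' \<in> Hom C Y' Z"
    using comp_hom X Y Y' Z ih dh b b' by blast+
  have b_inv: "cmp C b' (cmp C b f) = f" if "V \<in> Obj C" "f \<in> Hom C V Y" for V f
    using comp_assoc[OF that(1) Y Y' Y that(2) b b'] b'b comp_id_left[OF that(1) Y that(2)] by simp
  have "cmp C (cmp C d b') (cmp C b i) = cmp C d (cmp C b' (cmp C b i))"
    using comp_assoc[OF X Y' Y Z bi b' dh] by simp
  then have zero: "cmp C (cmp C d b') (cmp C b i) = pzero C X Z" using b_inv[OF X ih] di by simp
  show ?thesis
    unfolding is_kernel_def
  proof (intro conjI ballI impI)
    fix W g assume W: "W \<in> Obj C" and g: "g \<in> Hom C W Y'" and dg: "cmp C (cmp C d b') g = pzero C W Z"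
    have b'g: "cmp C b' g \<in> Hom C W Y" using comp_hom W Y' Y g b' by blast
    have "cmp C d (cmp C b' g) = pzero C W Z" using dg comp_assoc[OF W Y' Y Z g b' dh] by simp
    then obtain h where h: "h \<in> Hom C W X" "cmp C i h = cmp C b' g"
      and h_unique: "\<forall>h'\<in>Hom C W X. cmp C i h' = cmp C b' g \<longrightarrow> h' = h"
      using univ[OF W b'g] by blast
    show "\<exists>h\<in>Hom C W X. cmp C (cmp C b i) h = g \<and> (\<forall>h'\<in>Hom C W X. cmp C (cmp C b i) h' = g \<longrightarrow> h' = h)"
    proof (intro bexI conjI ballI impI)
      show "cmp C (cmp C b i) h = g"
        using comp_assoc[OF W X Y Y' h(1) ih b] h(2) comp_assoc[OF W Y' Y Y' g b' b] bb'
          comp_id_left[OF W Y' g] by simp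
    next
      fix h' assume h': "h' \<in> Hom C W X" and "cmp C (cmp C b i) h' = g"
      then have "cmp C i h' = cmp C b' g"
        using b_inv[OF W comp_hom[OF W X Y h' ih]] comp_assoc[OF W X Y Y' h' ih b] by simp
      then show "h' = h" using h_unique h' by blast
    qed (rule h(1))
  qed (use X Y' Z bi db' zero in auto)
qed

lemma is_cokernel_transport:
  assumes c: "is_cokernel C X Y Z i d" and Y': "Y' \<in> Obj C"
    and b: "b \<in> Hom C Y Y'" and b': "b' \<in> Hom C Y' Y"
    and b'b: "cmp C b' b = idm C Y" and bb': "cmp C b b' = idm C Y'"
  shows "is_cokernel C X Y' Z (cmp C b i) (cmp C d b')"
proof -
  have X: "X \<in> Obj C" and Y: "Y \<in> Obj C" and Z: "Z \<in> Obj C" and ih: "i \<in> Hom C X Y"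
    and dh: "d \<in> Hom C Y Z" and di: "cmp C d i = pzero C X Z"
    and univ: "\<And>W g. \<lbrakk>W \<in> Obj C; g \<in> Hom C Y W; cmp C g i = pzero C X W\<rbrakk>
        \<Longrightarrow> \<exists>h\<in>Hom C Z W. cmp C h d = g \<and> (\<forall>h'\<in>Hom C Z W. cmp C h' d = g \<longrightarrow> h' = h)"
    using c unfolding is_cokernel_def by blast+
  have bi: "cmp C b i \<in> Hom C X Y'" and db': "cmp C d b' \<in> Hom C Y' Z"
    using comp_hom X Y Y' Z ih dh b b' by blast+
  have db'b: "cmp C (cmp C d b') b = d"
    using comp_assoc[OF Y Y' Y Z b b' dh] b'b comp_id_right[OF Y Z dh] by simp
  have zero: "cmp C (cmp C d b') (cmp C b i) = pzero C X Z"
    using comp_assoc[OF X Y Y' Z ih b db'] db'b di by simp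
  show ?thesis
    unfolding is_cokernel_def
  proof (intro conjI ballI impI)
    fix W g assume W: "W \<in> Obj C" and g: "g \<in> Hom C Y' W" and gi: "cmp C g (cmp C b i) = pzero C X W"
    have gb: "cmp C g b \<in> Hom C Y W" using comp_hom Y Y' W b g by blast
    have "cmp C (cmp C g b) i = pzero C X W" using gi comp_assoc[OF X Y Y' W ih b g] by simp
    then obtain h where h: "h \<in> Hom C Z W" "cmp C h d = cmp C g b"
      and h_unique: "\<forall>h'\<in>Hom C Z W. cmp C h' d = cmp C g b \<longrightarrow> h' = h"
      using univ[OF W gb] by blast
    show "\<exists>h\<in>Hom C Z W. cmp C h (cmp C d b') = g \<and> (\<forall>h'\<in>Hom C Z W. cmp C h' (cmp C d b') = g \<longrightarrow> h' = h)"
    proof (intro bexI conjI ballI impI)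
      show "cmp C h (cmp C d b') = g"
        using comp_assoc[OF Y' Y Z W b' dh h(1)] h(2) comp_assoc[OF Y' Y Y' W b' b g] bb'
          comp_id_right[OF Y' W g] by simp
    next
      fix h' assume h': "h' \<in> Hom C Z W" and "cmp C h' (cmp C d b') = g"
      then have "cmp C h' d = cmp C g b"
        using db'b comp_assoc[OF Y Y' Z W b db' h'] by simp
      then show "h' = h" using h_unique h' by blast
    qed (rule h(1))
  qed (use X Y' Z bi db' zero in auto)
qed

end

section \<open>Exact categories and chains of admissible monics\<close>

locale exact_cat =
  fixes C :: "('o, 'm) addcat" and E :: "('o, 'm) conflations"
  assumes exact: "is_exact_category C E"

sublocale exact_cat \<subseteq> preadditive_cat C
  using exact unfolding is_exact_category_def is_additive_def by unfold_locales blast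

context exact_cat
begin

lemma conflation_kc_pair: "(X, Y, Z, i, d) \<in> E \<Longrightarrow> is_kc_pair C X Y Z i d"
  using exact unfolding is_exact_category_def by (elim conjE) fast

lemma adm_monic_hom: "adm_monic C E X Y i \<Longrightarrow> X \<in> Obj C \<and> Y \<in> Obj C \<and> i \<in> Hom C X Y"
  unfolding adm_monic_def using conflation_kc_pair unfolding is_kc_pair_def is_kernel_def by blast

lemma adm_monic_id: "X \<in> Obj C \<Longrightarrow> adm_monic C E X X (idm C X)"
  using exact unfolding is_exact_category_def by (elim conjE) blast

lemma adm_epic_id: "X \<in> Obj C \<Longrightarrow> adm_epic C E X X (idm C X)"
  using exact unfolding is_exact_category_def by (elim conjE) blast

lemma adm_monic_comp:
  "\<lbrakk>adm_monic C E X Y f; adm_monic C E Y Z g\<rbrakk> \<Longrightarrow> adm_monic C E X Z (cmp C g f)"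
  using exact unfolding is_exact_category_def by (elim conjE) blast

lemma conflation_iso_closed:
  "\<lbrakk>(X, Y, Z, i, d) \<in> E; is_kc_pair C X' Y' Z' i' d'; is_iso C X X' a; is_iso C Y Y' b; is_iso C Z Z' c;
    cmp C b i = cmp C i' a; cmp C c d = cmp C d' b\<rbrakk> \<Longrightarrow> (X', Y', Z', i', d') \<in> E"
  using exact unfolding is_exact_category_def by (elim conjE) fast

lemma adm_monic_pushout:
  assumes "adm_monic C E X Y i" and "X' \<in> Obj C" and "f \<in> Hom C X X'"
  obtains Y' i' f' where "Y' \<in> Obj C" "i' \<in> Hom C X' Y'" "f' \<in> Hom C Y Y'"
    and "cmp C i' f = cmp C f' i"
    and "\<forall>W\<in>Obj C. \<forall>a\<in>Hom C X' W. \<forall>b\<in>Hom C Y W. cmp C a f = cmp C b i \<longrightarrow>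
           (\<exists>h\<in>Hom C Y' W. cmp C h i' = a \<and> cmp C h f' = b \<and>
             (\<forall>h'\<in>Hom C Y' W. cmp C h' i' = a \<and> cmp C h' f' = b \<longrightarrow> h' = h))"
    and "adm_monic C E X' Y' i'"
proof -
  have "\<forall>X Y X' i f. adm_monic C E X Y i \<and> X' \<in> Obj C \<and> f \<in> Hom C X X' \<longrightarrow>
        (\<exists>Y' i' f'. Y' \<in> Obj C \<and> i' \<in> Hom C X' Y' \<and> f' \<in> Hom C Y Y' \<and>
           cmp C i' f = cmp C f' i \<and>
           (\<forall>W\<in>Obj C. \<forall>a\<in>Hom C X' W. \<forall>b\<in>Hom C Y W. cmp C a f = cmp C b i \<longrightarrow>
              (\<exists>h\<in>Hom C Y' W. cmp C h i' = a \<and> cmp C h f' = b \<and>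
                 (\<forall>h'\<in>Hom C Y' W. cmp C h' i' = a \<and> cmp C h' f' = b \<longrightarrow> h' = h))) \<and>
           adm_monic C E X' Y' i')"
    using exact unfolding is_exact_category_def by (elim conjE) assumption
  from this[rule_format, OF conjI[OF assms(1) conjI[OF assms(2,3)]]] that show ?thesis
    by (elim exE conjE) assumption
qed

lemma zero_adm_monic:
  assumes X: "X \<in> Obj C"
  obtains Z i where "is_zero_obj C Z" and "adm_monic C E Z X i"
proof -
  obtain Z i where c: "(Z, X, X, i, idm C X) \<in> E" using adm_epic_id[OF X] unfolding adm_epic_def by blast
  have k: "is_kernel C Z X X i (idm C X)" using conflation_kc_pair[OF c] unfolding is_kc_pair_def by blast
  have Z: "Z \<in> Obj C" and ih: "i \<in> Hom C Z X" and ci: "cmp C (idm C X) i = pzero C Z X"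
    using k unfolding is_kernel_def by blast+
  have i0: "i = pzero C Z X" using ci comp_id_left[OF Z X ih] by simp
  \<comment> \<open>Z is a kernel of the identity, so maps into Z are determined by their (zero) composite with i.\<close>
  have "is_zero_obj C Z"
  proof (rule zero_objI[OF Z])
    fix V h h' assume V: "V \<in> Obj C" and h: "h \<in> Hom C V Z" and h': "h' \<in> Hom C V Z"
    have g: "pzero C V X \<in> Hom C V X" using zero_hom V X by blast
    have "cmp C (idm C X) (pzero C V X) = pzero C V X" using comp_id_left V X g by blast
    then obtain h0 where "\<forall>h'\<in>Hom C V Z. cmp C i h' = pzero C V X \<longrightarrow> h' = h0"
      using k V g unfolding is_kernel_def by blast
    moreover have "cmp C i h = pzero C V X" "cmp C i h' = pzero C V X"
      using i0 comp_zero_left V Z X h h' by blast+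
    ultimately show "h = h'" using h h' by blast
  qed
  then show ?thesis using c that unfolding adm_monic_def by blast
qed

lemma iso_adm_monic:
  assumes phi: "is_iso C A X \<phi>"
  shows "adm_monic C E A X \<phi>"
proof -
  obtain \<psi> where A: "A \<in> Obj C" and X: "X \<in> Obj C" and ph: "\<phi> \<in> Hom C A X" and ps: "\<psi> \<in> Hom C X A"
    and \<psi>\<phi>: "cmp C \<psi> \<phi> = idm C A" and \<phi>\<psi>: "cmp C \<phi> \<psi> = idm C X"
    using phi unfolding is_iso_def by blast
  obtain Z d where c: "(A, A, Z, idm C A, d) \<in> E" using adm_monic_id[OF A] unfolding adm_monic_def by blast
  have kc: "is_kc_pair C A A Z (idm C A) d" using conflation_kc_pair[OF c] .
  have Z: "Z \<in> Obj C" and dh: "d \<in> Hom C A Z" using kc unfolding is_kc_pair_def is_kernel_def by blast+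
  have "is_kc_pair C A X Z (cmp C \<phi> (idm C A)) (cmp C d \<psi>)"
    using kc is_kernel_transport[OF _ X ph ps \<psi>\<phi> \<phi>\<psi>] is_cokernel_transport[OF _ X ph ps \<psi>\<phi> \<phi>\<psi>]
    unfolding is_kc_pair_def by blast
  then have kc': "is_kc_pair C A X Z \<phi> (cmp C d \<psi>)" using comp_id_right[OF A X ph] by simp
  have "cmp C (idm C Z) d = cmp C (cmp C d \<psi>) \<phi>"
    using comp_id_left[OF A Z dh] comp_assoc[OF A X A Z ph ps dh] \<psi>\<phi> comp_id_right[OF A Z dh] by simp
  then have "(A, X, Z, \<phi>, cmp C d \<psi>) \<in> E"
    using conflation_iso_closed[OF c kc' is_iso_id[OF A] phi is_iso_id[OF Z]] by simp
  then show ?thesis unfolding adm_monic_def by blast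
qed

lemma biproduct_inj_adm_monic:
  assumes bp: "is_biproduct C A B S i1 i2 p1 p2"
  shows "adm_monic C E A S i1"
proof -
  have A: "A \<in> Obj C" and B: "B \<in> Obj C" and S: "S \<in> Obj C" and i1: "i1 \<in> Hom C A S"
    and i2: "i2 \<in> Hom C B S"
    using bp unfolding is_biproduct_def by blast+
  \<comment> \<open>Push out an admissible monic from a zero object into B along the zero map into A:
    the pushout P is a biproduct of A and B, so it is isomorphic to S.\<close>
  obtain Z j where Z: "is_zero_obj C Z" and j: "adm_monic C E Z B j" using zero_adm_monic[OF B] .
  have Zo: "Z \<in> Obj C" and jh: "j \<in> Hom C Z B" using adm_monic_hom[OF j] by blast+
  have z: "pzero C Z A \<in> Hom C Z A" using zero_hom Zo A by blast
  obtain P i' f' where P: "P \<in> Obj C" and i': "i' \<in> Hom C A P" and f': "f' \<in> Hom C B P"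
    and comm: "cmp C i' (pzero C Z A) = cmp C f' j"
    and univ: "\<forall>W\<in>Obj C. \<forall>a\<in>Hom C A W. \<forall>b\<in>Hom C B W. cmp C a (pzero C Z A) = cmp C b j \<longrightarrow>
              (\<exists>h\<in>Hom C P W. cmp C h i' = a \<and> cmp C h f' = b \<and>
                 (\<forall>h'\<in>Hom C P W. cmp C h' i' = a \<and> cmp C h' f' = b \<longrightarrow> h' = h))"
    and am: "adm_monic C E A P i'"
    by (rule adm_monic_pushout[OF j A z])
  have "cmp C i1 (pzero C Z A) = cmp C i2 j"
    using zero_obj_hom_from[OF Z S comp_hom[OF Zo A S z i1]] zero_obj_hom_from[OF Z S comp_hom[OF Zo B S jh i2]]
    by simp
  then obtain h where h: "h \<in> Hom C P S" and hi: "cmp C h i' = i1" and hf: "cmp C h f' = i2"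
    using univ[rule_format, OF S i1 i2] by blast
  define g where "g = padd C (cmp C i' p1) (cmp C f' p2)"
  have g: "g \<in> Hom C S P" and gi1: "cmp C g i1 = i'" and gi2: "cmp C g i2 = f'"
    unfolding g_def using biproduct_copair[OF bp P i' f'] by blast+
  have hg: "cmp C h g = idm C S"
    unfolding g_def using comp_biproduct_copair_eq_id[OF bp P i' f' h hi hf] .
  obtain u where u_unique: "\<forall>u'\<in>Hom C P P. cmp C u' i' = i' \<and> cmp C u' f' = f' \<longrightarrow> u' = u"
    using univ[rule_format, OF P i' f' comm] by blast
  have "cmp C (cmp C g h) i' = i'" "cmp C (cmp C g h) f' = f'"
    using comp_assoc[OF A P S P i' h g] comp_assoc[OF B P S P f' h g] hi hf gi1 gi2 by simp_all
  then have "cmp C g h = u" using u_unique comp_hom[OF P S P h g] by blast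
  moreover have "idm C P = u" using u_unique id_hom[OF P] comp_id_left A B P i' f' by blast
  ultimately have gh: "cmp C g h = idm C P" by simp
  have "is_iso C P S h" unfolding is_iso_def using P S h g hg gh by blast
  from adm_monic_comp[OF am iso_adm_monic[OF this]] show ?thesis using hi by simp
qed

lemma adm_monic_into_zero_obj:
  assumes i: "adm_monic C E W Z i" and Z: "is_zero_obj C Z"
  shows "is_zero_obj C W"
proof -
  obtain Q d where "(W, Z, Q, i, d) \<in> E" using i unfolding adm_monic_def by blast
  then have k: "is_kernel C W Z Q i d" using conflation_kc_pair unfolding is_kc_pair_def by blast
  have W: "W \<in> Obj C" and Zo: "Z \<in> Obj C" and ih: "i \<in> Hom C W Z"
    using adm_monic_hom[OF i] by blast+
  show ?thesis
  proof (rule zero_objI[OF W])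
    fix V h h' assume V: "V \<in> Obj C" and h: "h \<in> Hom C V W" and h': "h' \<in> Hom C V W"
    have ih0: "cmp C i h = pzero C V Z"
      using zero_obj_hom_to[OF Z V] comp_hom[OF V W Zo h ih] by blast
    have "cmp C d (pzero C V Z) = pzero C V Q"
      using k V comp_zero_right unfolding is_kernel_def by blast
    then obtain u where "\<forall>u'\<in>Hom C V W. cmp C i u' = pzero C V Z \<longrightarrow> u' = u"
      using k V zero_hom[OF V Zo] unfolding is_kernel_def by blast
    moreover have "cmp C i h' = pzero C V Z"
      using zero_obj_hom_to[OF Z V] comp_hom[OF V W Zo h' ih] by blast
    ultimately show "h = h'" using h h' ih0 by blast
  qed
qed

lemma proper_adm_sub_Obj: "proper_adm_sub C E A B \<Longrightarrow> A \<in> Obj C \<and> B \<in> Obj C"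
  unfolding proper_adm_sub_def using adm_monic_hom by blast

lemma proper_adm_sub_nonzero: "proper_adm_sub C E A Z \<Longrightarrow> \<not> is_zero_obj C Z"
  unfolding proper_adm_sub_def
  using adm_monic_into_zero_obj zero_obj_is_iso adm_monic_hom by blast

lemma zero_proper_adm_sub:
  assumes "X \<in> Obj C" and "\<not> is_zero_obj C X"
  obtains Z where "is_zero_obj C Z" and "proper_adm_sub C E Z X"
proof -
  obtain Z i where Z: "is_zero_obj C Z" and i: "adm_monic C E Z X i" using zero_adm_monic[OF assms(1)] .
  have "\<not> is_iso C Z X i" using is_iso_zero_obj[OF Z] assms(2) by blast
  then show ?thesis using that Z i unfolding proper_adm_sub_def by blast
qed

lemma E_chain_singleton [simp]: "E_chain C E [X] \<longleftrightarrow> X \<in> Obj C"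
  unfolding E_chain_def by simp

lemma E_chain_Cons_Cons:
  "E_chain C E (X # Y # ys) \<longleftrightarrow> proper_adm_sub C E X Y \<and> E_chain C E (Y # ys)"
  unfolding E_chain_def using proper_adm_sub_Obj by (auto simp: All_less_Suc2)

lemma E_chain_append:
  assumes "xs \<noteq> []" and "ys \<noteq> []"
  shows "E_chain C E (xs @ ys) \<longleftrightarrow> E_chain C E xs \<and> E_chain C E ys \<and> proper_adm_sub C E (last xs) (hd ys)"
  using assms(1)
proof (induction xs rule: list_nonempty_induct)
  case (single X)
  then show ?case using assms(2) proper_adm_sub_Obj
    by (cases ys) (auto simp: E_chain_Cons_Cons)
next
  case (cons X xs)
  then show ?case by (cases xs) (auto simp: E_chain_Cons_Cons)
qed

lemma E_chain_adm_monic: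
  assumes "E_chain C E xs"
  obtains i where "adm_monic C E (hd xs) (last xs) i"
  using assms
proof (induction xs arbitrary: thesis rule: induct_list012)
  case 1
  then show ?case by (simp add: E_chain_def)
next
  case (2 X)
  then show ?case using adm_monic_id by simp blast
next
  case (3 X Y ys)
  obtain i where i: "adm_monic C E X Y i" and "E_chain C E (Y # ys)"
    using "3.prems"(2) unfolding E_chain_Cons_Cons proper_adm_sub_def by blast
  then obtain j where "adm_monic C E Y (last (Y # ys)) j" using "3.IH"(2) by auto
  then show ?case using "3.prems"(1) adm_monic_comp[OF i] by simp blast
qed

lemma proper_adm_sub_iso_trans:
  assumes WX: "proper_adm_sub C E W X" and \<psi>: "is_iso C X A \<psi>"
  shows "proper_adm_sub C E W A"
proof -
  obtain j where j: "adm_monic C E W X j" and nj: "\<not> is_iso C W X j"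
    using WX unfolding proper_adm_sub_def by blast
  have "\<not> is_iso C W A (cmp C \<psi> j)"
    using is_iso_cancel_left[OF \<psi>] adm_monic_hom[OF j] nj by blast
  then show ?thesis
    unfolding proper_adm_sub_def using adm_monic_comp[OF j iso_adm_monic[OF \<psi>]] by blast
qed

lemma E_chain_adm_monic_last:
  assumes "E_chain C E xs" and "Y \<in> set xs"
  obtains i where "adm_monic C E Y (last xs) i"
proof -
  obtain as bs where xs: "xs = as @ Y # bs" using split_list[OF assms(2)] by blast
  have "E_chain C E (Y # bs)"
    using assms(1) E_chain_append[of as "Y # bs"] unfolding xs by (cases "as = []") auto
  then obtain i where "adm_monic C E (hd (Y # bs)) (last (Y # bs)) i" by (rule E_chain_adm_monic)
  moreover have "last xs = last (Y # bs)" using xs by simp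
  ultimately show ?thesis using that by simp
qed

end

section \<open>Lengths and the Gabriel-Roiter measure\<close>

locale finite_exact_cat = exact_cat C E for C :: "('o, 'm) addcat" and E +
  assumes finite: "E_finite C E"
begin

definition len :: "'o \<Rightarrow> nat" where
  "len X = the_enat (E_length C E X)"

lemma E_length_eq_len: "X \<in> Obj C \<Longrightarrow> E_length C E X = enat (len X)"
  using finite unfolding E_finite_def len_def by auto

lemma E_chain_length_le_len:
  assumes "E_chain C E xs" and "is_zero_obj C (hd xs)"
  shows "length xs \<le> Suc (len (last xs))"
proof -
  have "last xs \<in> Obj C" using assms(1) unfolding E_chain_def by auto
  moreover have "enat (length xs - 1) \<le> E_length C E (last xs)"
    unfolding E_length_def by (rule Sup_upper) (use assms in blast)
  ultimately show ?thesis using E_length_eq_len by simp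
qed

lemma longest_E_chain:
  assumes X: "X \<in> Obj C"
  obtains xs where "E_chain C E xs" "is_zero_obj C (hd xs)" "last xs = X" "length xs = Suc (len X)"
proof -
  define L where "L = {enat (length xs - 1) | xs. E_chain C E xs \<and> is_zero_obj C (hd xs) \<and> last xs = X}"
  have "L \<noteq> {}"
  proof (cases "is_zero_obj C X")
    case True
    then have "enat (length [X] - 1) \<in> L" unfolding L_def using X by fastforce
    then show ?thesis by blast
  next
    case False
    then obtain Z where "is_zero_obj C Z" "proper_adm_sub C E Z X" using zero_proper_adm_sub X by blast
    then have "enat (length [Z, X] - 1) \<in> L" unfolding L_def using X by (fastforce simp: E_chain_Cons_Cons)
    then show ?thesis by blast
  qed
  moreover have "Sup L = enat (len X)" using E_length_eq_len[OF X] unfolding L_def E_length_def .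
  ultimately have "finite L" and "Sup L = Max L" unfolding Sup_enat_def by (auto split: if_splits)
  then have "enat (len X) \<in> L" using Max_in \<open>L \<noteq> {}\<close> \<open>Sup L = enat (len X)\<close> by metis
  then obtain xs where xs: "E_chain C E xs" "is_zero_obj C (hd xs)" "last xs = X"
    and "len X = length xs - 1"
    unfolding L_def by auto
  moreover have "xs \<noteq> []" using xs(1) unfolding E_chain_def by blast
  ultimately show ?thesis using that by simp
qed

lemma len_strict_mono:
  assumes AB: "proper_adm_sub C E A B"
  shows "len A < len B"
proof -
  have A: "A \<in> Obj C" and B: "B \<in> Obj C" using proper_adm_sub_Obj[OF AB] by blast+
  obtain xs where xs: "E_chain C E xs" "is_zero_obj C (hd xs)" "last xs = A" "length xs = Suc (len A)"
    using longest_E_chain[OF A] .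
  have "xs \<noteq> []" using xs(4) by auto
  then have "E_chain C E (xs @ [B])"
    using E_chain_append[of xs "[B]"] xs(1,3) AB B by simp
  from E_chain_length_le_len[OF this] show ?thesis using xs \<open>xs \<noteq> []\<close> by simp
qed

lemma longest_E_chain_butlast:
  assumes X: "X \<in> Obj C" and "len X \<noteq> 0"
  obtains ys where "E_chain C E ys" "is_zero_obj C (hd ys)" "proper_adm_sub C E (last ys) X"
    "length ys = len X"
proof -
  obtain xs where xs: "E_chain C E xs" "is_zero_obj C (hd xs)" "last xs = X" "length xs = Suc (len X)"
    using longest_E_chain[OF X] .
  have "length (butlast xs) = len X" using xs(4) by simp
  then have ne: "butlast xs \<noteq> []" using assms(2) by (metis list.size(3))
  have "xs = butlast xs @ [X]" using xs(3,4) append_butlast_last_id[of xs] by fastforce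
  then have "E_chain C E (butlast xs)" "proper_adm_sub C E (last (butlast xs)) X"
    and "hd (butlast xs) = hd xs"
    using xs(1) E_chain_append[OF ne, of "[X]"] ne by (simp_all add: hd_append) (metis hd_append2 ne)
  then show ?thesis using that xs(2) \<open>length (butlast xs) = len X\<close> by simp
qed

lemma len_eq_0_iff:
  assumes X: "X \<in> Obj C"
  shows "len X = 0 \<longleftrightarrow> is_zero_obj C X"
proof
  assume "len X = 0"
  show "is_zero_obj C X"
  proof (rule ccontr)
    assume "\<not> is_zero_obj C X"
    then obtain Z where "proper_adm_sub C E Z X" using zero_proper_adm_sub X by blast
    then show False using len_strict_mono \<open>len X = 0\<close> by fastforce
  qed
next
  assume "is_zero_obj C X"
  then show "len X = 0"
    using longest_E_chain_butlast[OF X] proper_adm_sub_nonzero by blast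
qed

lemma iso_len_le:
  assumes \<phi>: "is_iso C A X \<phi>"
  shows "len X \<le> len A"
proof (cases "len X = 0")
  case False
  obtain \<psi> where \<psi>: "is_iso C X A \<psi>" and X: "X \<in> Obj C" and A: "A \<in> Obj C"
    using \<phi> unfolding is_iso_def by blast
  obtain ys where ys: "E_chain C E ys" "is_zero_obj C (hd ys)" "proper_adm_sub C E (last ys) X"
    "length ys = len X"
    using longest_E_chain_butlast[OF X False] .
  have "ys \<noteq> []" using ys(1) unfolding E_chain_def by blast
  then have "E_chain C E (ys @ [A])"
    using E_chain_append[of ys "[A]"] ys(1) proper_adm_sub_iso_trans[OF ys(3) \<psi>] A by simp
  from E_chain_length_le_len[OF this] show ?thesis using ys(2,4) \<open>ys \<noteq> []\<close> by simp
qed simp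

lemma iso_len_eq: "is_iso C A X \<phi> \<Longrightarrow> len A = len X"
  using iso_len_le is_iso_inverse by (meson le_antisym)

lemma adm_monic_len_le: "adm_monic C E A B i \<Longrightarrow> len A \<le> len B"
  using iso_len_eq len_strict_mono unfolding proper_adm_sub_def by (metis less_imp_le order_refl)

lemma len_one_adm_sub:
  assumes Y: "Y \<in> Obj C" and nz: "\<not> is_zero_obj C Y"
  obtains S i where "len S = 1" and "adm_monic C E S Y i"
proof -
  obtain xs where xs: "E_chain C E xs" "is_zero_obj C (hd xs)" "last xs = Y" "length xs = Suc (len Y)"
    using longest_E_chain[OF Y] .
  have "len Y \<noteq> 0" using len_eq_0_iff[OF Y] nz by blast
  then obtain Z S rest where xs_eq: "xs = Z # S # rest"
    using xs(4) by (cases xs; cases "tl xs") auto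
  have ZS: "proper_adm_sub C E Z S" and chain: "E_chain C E (S # rest)"
    using xs(1) unfolding xs_eq E_chain_Cons_Cons by blast+
  have So: "S \<in> Obj C" using proper_adm_sub_Obj[OF ZS] by blast
  have "E_chain C E [Z, S]" using ZS So by (simp add: E_chain_Cons_Cons)
  then have "1 \<le> len S" using E_chain_length_le_len xs(2) xs_eq by fastforce
  \<comment> \<open>Otherwise a longest chain to S, followed by the rest of xs, would be too long a chain to Y.\<close>
  moreover have "len S \<le> 1"
  proof (cases "rest = []")
    case True
    then show ?thesis using xs(3,4) xs_eq by simp
  next
    case False
    obtain ys where ys: "E_chain C E ys" "is_zero_obj C (hd ys)" "last ys = S" "length ys = Suc (len S)"
      using longest_E_chain[OF So] .
    have "ys \<noteq> []" using ys(4) by auto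
    have "E_chain C E rest" "proper_adm_sub C E S (hd rest)"
      using chain E_chain_append[of "[S]" rest] False by simp_all
    then have "E_chain C E (ys @ rest)"
      using E_chain_append[OF \<open>ys \<noteq> []\<close> False] ys(1,3) by simp
    from E_chain_length_le_len[OF this] show ?thesis
      using ys(2,4) xs(3,4) xs_eq False \<open>ys \<noteq> []\<close> by simp
  qed
  moreover obtain i where "adm_monic C E S Y i"
    using E_chain_adm_monic[OF chain] xs(3) xs_eq by (metis last.simps list.distinct(1) list.sel(1))
  ultimately show ?thesis using that by simp
qed

lemma len_one_E_simple:
  assumes X: "X \<in> Obj C" and "len X = 1"
  shows "E_simple C E X"
  unfolding E_simple_def
proof (intro conjI allI impI)
  fix A i assume i: "adm_monic C E A X i"
  show "is_zero_obj C A \<or> isomorphic C A X"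
  proof (cases "is_iso C A X i")
    case True
    then show ?thesis unfolding isomorphic_def by blast
  next
    case False
    then have "len A < len X" using i len_strict_mono unfolding proper_adm_sub_def by blast
    then show ?thesis using len_eq_0_iff adm_monic_hom[OF i] \<open>len X = 1\<close> by simp
  qed
qed (use X len_eq_0_iff[OF X] \<open>len X = 1\<close> in auto)

lemma E_simple_len_one:
  assumes X: "E_simple C E X"
  shows "len X = 1"
proof -
  have "X \<in> Obj C" and "\<not> is_zero_obj C X" using X unfolding E_simple_def by blast+
  then obtain S i where S: "len S = 1" and i: "adm_monic C E S X i" using len_one_adm_sub by blast
  have "\<not> is_zero_obj C S" using S len_eq_0_iff adm_monic_hom[OF i] by force
  then have "isomorphic C S X" using X i unfolding E_simple_def by blast
  then show ?thesis using iso_len_eq S unfolding isomorphic_def by metis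
qed

lemma len_one_indecomposable:
  assumes X: "X \<in> Obj C" and len: "len X = 1"
  shows "indecomposable C X"
  unfolding indecomposable_def
proof (intro conjI allI impI)
  fix X1 X2 i1 i2 p1 p2 assume bp: "is_biproduct C X1 X2 X i1 i2 p1 p2"
  show "is_zero_obj C X1 \<or> is_zero_obj C X2"
  proof (cases "is_iso C X1 X i1")
    case True
    then show ?thesis using biproduct_zero_if_inj_iso[OF bp] by blast
  next
    case False
    then have "len X1 < len X"
      using len_strict_mono biproduct_inj_adm_monic[OF bp] unfolding proper_adm_sub_def by blast
    then show ?thesis using len len_eq_0_iff bp unfolding is_biproduct_def by simp
  qed
qed (use X len len_eq_0_iff[OF X] in auto)

lemma GR_seqs_singleton: "indecomposable C X \<Longrightarrow> [len X] \<in> GR_seqs C E X"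
  unfolding GR_seqs_def len_def indecomposable_def
  by (intro CollectI exI[of _ "[X]"]) simp

lemma GR_seqs_bounds:
  assumes X: "indecomposable C X" and s: "s \<in> GR_seqs C E X"
  shows "s \<noteq> []" and "last s = len X" and "length s \<le> len X" and "set s \<subseteq> {1..len X}"
proof -
  obtain xs where xs: "E_chain C E xs" "last xs = X" "\<forall>Y\<in>set xs. indecomposable C Y"
    and s_eq: "s = map len xs"
    using s unfolding GR_seqs_def len_def by blast
  have ne: "xs \<noteq> []" using xs(1) unfolding E_chain_def by blast
  show "s \<noteq> []" and "last s = len X" using ne s_eq xs(2) by (simp_all add: last_map)
  have "hd xs \<in> Obj C" "\<not> is_zero_obj C (hd xs)" using xs(3) ne unfolding indecomposable_def by simp_all
  then obtain Z where Z: "is_zero_obj C Z" "proper_adm_sub C E Z (hd xs)"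
    using zero_proper_adm_sub by blast
  then have "E_chain C E ([Z] @ xs)"
    using E_chain_append[of "[Z]" xs] ne xs(1) zero_obj_Obj by simp
  from E_chain_length_le_len[OF this] show "length s \<le> len X" using Z xs(2) ne s_eq by simp
  have "1 \<le> len Y \<and> len Y \<le> len X" if Y: "Y \<in> set xs" for Y
  proof
    have "Y \<in> Obj C" "\<not> is_zero_obj C Y" using xs(3) Y unfolding indecomposable_def by blast+
    then show "1 \<le> len Y" using len_eq_0_iff[of Y] by (simp add: Suc_le_eq)
    obtain i where "adm_monic C E Y (last xs) i" using E_chain_adm_monic_last[OF xs(1) Y] .
    then show "len Y \<le> len X" using adm_monic_len_le xs(2) by blast
  qed
  then show "set s \<subseteq> {1..len X}" using s_eq by auto
qed

lemma finite_GR_seqs: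
  assumes "indecomposable C X"
  shows "finite (GR_seqs C E X)"
proof (rule finite_subset)
  show "GR_seqs C E X \<subseteq> {s. set s \<subseteq> {1..len X} \<and> length s \<le> len X}"
    using GR_seqs_bounds[OF assms] by blast
qed (rule finite_lists_length_le, simp)

lemma GR_measure_greatest:
  assumes X: "indecomposable C X"
  shows "GR_measure C E X \<in> GR_seqs C E X" and "\<And>t. t \<in> GR_seqs C E X \<Longrightarrow> t \<lll> GR_measure C E X"
proof -
  obtain m where m: "m \<in> GR_seqs C E X" "\<forall>t\<in>GR_seqs C E X. t \<lll> m"
    using finite_has_seq_le_greatest[OF finite_GR_seqs[OF X]] GR_seqs_singleton[OF X] by blast
  have "GR_measure C E X = m"
    unfolding GR_measure_def using m seq_le_antisym by (intro the_equality) blast+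
  then show "GR_measure C E X \<in> GR_seqs C E X" and "\<And>t. t \<in> GR_seqs C E X \<Longrightarrow> t \<lll> GR_measure C E X"
    using m by simp_all
qed

lemma hd_GR_measure:
  assumes Y: "indecomposable C Y"
  shows "hd (GR_measure C E Y) = 1"
proof -
  let ?m = "GR_measure C E Y"
  have m: "?m \<noteq> []" "set ?m \<subseteq> {1..len Y}" using GR_seqs_bounds[OF Y GR_measure_greatest(1)[OF Y]] by blast+
  have Yo: "Y \<in> Obj C" and "\<not> is_zero_obj C Y" using Y unfolding indecomposable_def by blast+
  then obtain S i where S: "len S = 1" and i: "adm_monic C E S Y i" using len_one_adm_sub by blast
  \<comment> \<open>A chain starting at an object of length 1 gives a candidate sequence with head 1.\<close>
  obtain t where t: "t \<in> GR_seqs C E Y" "t \<noteq> []" "hd t = 1"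
  proof (cases "is_iso C S Y i")
    case True
    then show ?thesis using that GR_seqs_singleton[OF Y] iso_len_eq S by force
  next
    case False
    then have "proper_adm_sub C E S Y" using i unfolding proper_adm_sub_def by blast
    moreover have "indecomposable C S" using len_one_indecomposable S adm_monic_hom[OF i] by blast
    ultimately have "map len [S, Y] \<in> GR_seqs C E Y"
      unfolding GR_seqs_def len_def using Y Yo
      by (intro CollectI exI[of _ "[S, Y]"]) (simp add: E_chain_Cons_Cons)
    then show ?thesis using that S by simp
  qed
  have "hd ?m \<le> 1" using seq_le_hd[OF GR_measure_greatest(2)[OF Y t(1)] t(2) m(1)] t(3) by simp
  moreover have "hd ?m \<in> {1..len Y}" using m hd_in_set by blast
  ultimately show ?thesis by simp
qed

lemma GR_measure_eq_one_iff_E_simple: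
  assumes X: "indecomposable C X"
  shows "GR_measure C E X = [1] \<longleftrightarrow> E_simple C E X"
proof -
  have Xo: "X \<in> Obj C" using X unfolding indecomposable_def by blast
  have m: "GR_measure C E X \<noteq> []" "last (GR_measure C E X) = len X" "length (GR_measure C E X) \<le> len X"
    using GR_seqs_bounds[OF X GR_measure_greatest(1)[OF X]] by blast+
  show ?thesis
  proof
    assume "GR_measure C E X = [1]"
    then show "E_simple C E X" using m(2) len_one_E_simple[OF Xo] by simp
  next
    assume "E_simple C E X"
    then have "len X = 1" by (rule E_simple_len_one)
    then show "GR_measure C E X = [1]" using m by (cases "GR_measure C E X") auto
  qed
qed

lemma singleton_one_seq_le_GR_measure:
  assumes Y: "indecomposable C Y"
  shows "[1] \<lll> GR_measure C E Y"
  using singleton_hd_seq_le[OF GR_seqs_bounds(1)[OF Y GR_measure_greatest(1)[OF Y]]]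
  unfolding hd_GR_measure[OF Y] .

lemma E_simple_iff_GR_measure_least:
  assumes X: "indecomposable C X"
  shows "E_simple C E X \<longleftrightarrow> (\<forall>Y. indecomposable C Y \<longrightarrow> GR_measure C E X \<lll> GR_measure C E Y)"
proof
  assume "E_simple C E X"
  then show "\<forall>Y. indecomposable C Y \<longrightarrow> GR_measure C E X \<lll> GR_measure C E Y"
    using GR_measure_eq_one_iff_E_simple[OF X] singleton_one_seq_le_GR_measure by simp
next
  assume least: "\<forall>Y. indecomposable C Y \<longrightarrow> GR_measure C E X \<lll> GR_measure C E Y"
  obtain S i where S: "len S = 1" and i: "adm_monic C E S X i"
    using len_one_adm_sub X unfolding indecomposable_def by blast
  have "indecomposable C S" "E_simple C E S"
    using S adm_monic_hom[OF i] len_one_indecomposable len_one_E_simple by blast+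
  then have "GR_measure C E X \<lll> [1]"
    using least GR_measure_eq_one_iff_E_simple[of S] by metis
  then have "GR_measure C E X = [1]"
    using seq_le_singleton_hd[of "GR_measure C E X"] hd_GR_measure[OF X]
      GR_seqs_bounds(1)[OF X GR_measure_greatest(1)[OF X]]
    by simp
  then show "E_simple C E X" using GR_measure_eq_one_iff_E_simple[OF X] by blast
qed

lemma finite_GR_measures_E_length_le:
  "finite {GR_measure C E X | X. indecomposable C X \<and> E_length C E X \<le> enat n}"
proof (rule finite_subset)
  show "{GR_measure C E X | X. indecomposable C X \<and> E_length C E X \<le> enat n}
      \<subseteq> {s. set s \<subseteq> {1..n} \<and> length s \<le> n}"
  proof clarify
    fix X assume X: "indecomposable C X" and "E_length C E X \<le> enat n"
    then have "len X \<le> n" using E_length_eq_len unfolding indecomposable_def by simp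
    then show "set (GR_measure C E X) \<subseteq> {1..n} \<and> length (GR_measure C E X) \<le> n"
      using GR_seqs_bounds(3,4)[OF X GR_measure_greatest(1)[OF X]] by auto
  qed
  show "finite {s. set s \<subseteq> {1..n} \<and> length s \<le> n}"
    by (rule finite_lists_length_le) simp
qed

end

theorem proposition7p8:
  fixes C :: "('o,'m) addcat" and E :: "('o,'m) conflations"
  assumes "is_exact_category C E" and "E_finite C E"
  shows "(\<forall>X Y. indecomposable C X \<and> indecomposable C Y \<longrightarrow>
            GR_measure C E X \<lll> GR_measure C E Y \<or> GR_measure C E Y \<lll> GR_measure C E X)
       \<and> (\<forall>n::nat. finite {GR_measure C E X | X.
            indecomposable C X \<and> E_length C E X \<le> enat n})
       \<and> (\<forall>X. indecomposable C X \<longrightarrow>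
            (E_simple C E X \<longleftrightarrow> (\<forall>Y. indecomposable C Y \<longrightarrow> GR_measure C E X \<lll> GR_measure C E Y)))"
proof -
  interpret finite_exact_cat C E
    using assms by unfold_locales
  show ?thesis
    by (simp add: seq_le_total finite_GR_measures_E_length_le E_simple_iff_GR_measure_least)
qed

end
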